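(* Let $L>0$ and $M>0$ be constants, and let $N$ be a real constant with $$|N|\le \frac{8M}{L^3}.$$ Then for every $p\in L^1[0,L]$ the nonlocal boundary value problem $$y^{(4)}(x)-My''(x)+N\int_0^L y(t)\,dt=p(x)\ \ \text{for a.e. } x\in(0,L),\qquad y(0)=y(L)=y''(0)=y''(L)=0,$$ has a unique solution $y\in W^{4,1}[0,L]$, and it is given by $$y(x)=\int_0^L G(x,s)p(s)\,ds-\frac{N\int_0^L G(x,s)\,ds}{1+N\int_0^L\!\int_0^L G(x,s)\,ds\,dx}\int_0^L\!\int_0^L G(x,s)p(s)\,ds\,dx,\qquad x\in[0,L].$$
   Context: $G$ is the Green function of $y''''-My''=0$ with the boundary conditions $y(0)=y(L)=y''(0)=y''(L)=0$, explicitly $$G(x,s)=\begin{cases}\dfrac{x(L-s)}{ML}-\dfrac{\sinh(\sqrt M x)\sinh(\sqrt M(L-s))}{M\sqrt M\sinh(\sqrt M L)}, & 0\le x\le s\le L,\\[2mm] \dfrac{s(L-x)}{ML}-\dfrac{\sinh(\sqrt M s)\sinh(\sqrt M(L-x))}{M\sqrt M\sinh(\sqrt M L)}, & 0\le s\le x\le L.\end{cases}$$ *)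

theory Defs
  imports "HOL-Analysis.Analysis"
begin

text \<open>Green function of y'''' - M y'' = 0 with y(0)=y(L)=y''(0)=y''(L)=0.\<close>
definition green :: "real \<Rightarrow> real \<Rightarrow> real \<Rightarrow> real \<Rightarrow> real" where
  "green M L x s =
     (if x \<le> s then
        x * (L - s) / (M * L)
        - sinh (sqrt M * x) * sinh (sqrt M * (L - s)) / (M * sqrt M * sinh (sqrt M * L))
      else
        s * (L - x) / (M * L)
        - sinh (sqrt M * s) * sinh (sqrt M * (L - x)) / (M * sqrt M * sinh (sqrt M * L)))"

text \<open>Membership in W^{4,1}[0,L]:
  y, y', y'' are differentiable on [0,L] (one-sided at the ends) with derivatives y1, y2, y3,
  and y3 is absolutely continuous, i.e. the indefinite integral of an L^1 function g
  (which is then y'''' a.e.).\<close>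
definition is_solution :: "real \<Rightarrow> real \<Rightarrow> real \<Rightarrow> (real \<Rightarrow> real) \<Rightarrow> (real \<Rightarrow> real) \<Rightarrow> bool" where
  "is_solution M N L p y \<longleftrightarrow>
     (\<exists>y1 y2 y3 g.
        g absolutely_integrable_on {0..L} \<and>
        (\<forall>x\<in>{0..L}.
            (y has_real_derivative y1 x) (at x within {0..L}) \<and>
            (y1 has_real_derivative y2 x) (at x within {0..L}) \<and>
            (y2 has_real_derivative y3 x) (at x within {0..L}) \<and>
            y3 x = y3 0 + integral {0..x} g) \<and>
        (\<exists>S. negligible S \<and>
            (\<forall>x\<in>{0<..<L} - S. g x - M * y2 x + N * integral {0..L} y = p x)) \<and>
        y 0 = 0 \<and> y L = 0 \<and> y2 0 = 0 \<and> y2 L = 0)"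

end

theory Submission
  imports Defs
begin

text \<open>
  For q integrable put Y x = \<integral> G(x,s) q(s) ds. On either side of the diagonal, G and its
  x-derivatives are combinations of s, sinh (sqrt M s) (for s < x) and of L - s,
  sinh (sqrt M (L - s)) (for s > x) with coefficients smooth in x. A term a(x) \<integral>{0..x} \<alpha> q is
  differentiable up to a(x) \<alpha>(x) \<integral>{0..x} q, even though q is merely integrable; for the
  derivatives of G of order below three these terms cancel across the diagonal, and at order
  three they leave exactly \<integral>{0..x} q. So Y is a W^{4,1} solution of y'''' - M y'' = q with the
  boundary conditions.

  If y'''' - M y'' = d is constant, integrating by parts gives \<integral> (y'')^2 + M \<integral> (y')^2 = d \<integral> y,
  and with the Poincare-type inequality 12 (\<integral> y)^2 \<le> L^3 \<integral> (y')^2 this becomes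
  12 M (\<integral> y)^2 \<le> L^3 d \<integral> y. The difference w of two solutions of the nonlocal problem has
  d = - N \<integral> w, so |N| \<le> 8 M / L^3 forces \<integral> w = 0 and then w = 0. For W x = \<integral> G(x,s) ds
  (d = 1) the same inequality gives 0 \<le> \<integral> W \<le> L^3 / (12 M), hence 1 + N \<integral> W \<ge> 1/3, and the
  stated formula is Y - K W with the constant K determined by K = N \<integral> (Y - K W).
\<close>

section \<open>Differentiating integrals against an integrable weight\<close>

lemma bounded_real_derivative_imp_lipschitz:
  fixes f :: "real \<Rightarrow> real"
  assumes "\<And>x. x \<in> {a..b} \<Longrightarrow> (f has_real_derivative f' x) (at x within {a..b})"
    and "\<And>x. x \<in> {a..b} \<Longrightarrow> \<bar>f' x\<bar> \<le> B" and "0 \<le> B"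
  shows "B-lipschitz_on {a..b} f"
proof (rule bounded_derivative_imp_lipschitz)
  show "(f has_derivative (\<lambda>h. f' x * h)) (at x within {a..b})" if "x \<in> {a..b}" for x
    using assms(1)[OF that] by (simp add: has_field_derivative_def)
  show "onorm (\<lambda>h. f' x * h) \<le> B" if "x \<in> {a..b}" for x
    using assms(2)[OF that] by (intro onorm_le) (simp add: abs_mult mult_right_mono)
qed (use assms(3) in auto)

lemma lipschitz_on_sinh_scaled:
  fixes k L :: real
  assumes "0 \<le> k"
  shows "(k * cosh (k * L))-lipschitz_on {0..L} (\<lambda>s. sinh (k * s))"
    and "(k * cosh (k * L))-lipschitz_on {0..L} (\<lambda>s. sinh (k * (L - s)))"
proof -
  have bound: "cosh (k * t) * k \<le> k * cosh (k * L)" if "t \<in> {0..L}" for t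
    using that assms
    by (subst mult.commute, intro mult_left_mono) (auto simp: cosh_real_nonneg_le_iff intro: mult_left_mono)
  have "0 \<le> k * cosh (k * L)"
    using assms by simp
  then show "(k * cosh (k * L))-lipschitz_on {0..L} (\<lambda>s. sinh (k * s))"
    and "(k * cosh (k * L))-lipschitz_on {0..L} (\<lambda>s. sinh (k * (L - s)))"
    using assms bound bound[of "L - _"]
    by (auto intro!: bounded_real_derivative_imp_lipschitz derivative_eq_intros)
qed

lemma integral_interval_diff:
  fixes f :: "real \<Rightarrow> real"
  assumes "f integrable_on {a..b}" "a \<le> u" "u \<le> v" "v \<le> b"
  shows "integral {a..v} f - integral {a..u} f = integral {u..v} f"
proof -
  have "f integrable_on {a..v}"
    using integrable_on_subinterval[OF assms(1)] assms by auto
  then show ?thesis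
    using Henstock_Kurzweil_Integration.integral_combine[where a=a and c=u and b=v and f=f] assms by simp
qed

lemma absolutely_integrable_continuous_mult:
  fixes \<alpha> q :: "real \<Rightarrow> real"
  assumes "continuous_on {a..b} \<alpha>" "q absolutely_integrable_on {a..b}"
  shows "(\<lambda>s. \<alpha> s * q s) absolutely_integrable_on {a..b}"
  by (rule absolutely_integrable_bounded_measurable_product_real)
     (auto intro: assms continuous_imp_measurable_on_sets_lebesgue compact_imp_bounded compact_continuous_image)

lemma fundamental_theorem_of_calculus_real:
  fixes F f :: "real \<Rightarrow> real"
  assumes "a \<le> b" and "\<And>x. x \<in> {a..b} \<Longrightarrow> (F has_real_derivative f x) (at x within {a..b})"
  shows "(f has_integral (F b - F a)) {a..b}"
  using assms
  by (intro fundamental_theorem_of_calculus) (auto simp: has_real_derivative_iff_has_vector_derivative[symmetric])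

lemma DERIV_increment_mult_continuous:
  fixes c A :: "real \<Rightarrow> real"
  assumes "(c has_real_derivative c') (at x0 within S)" "continuous (at x0 within S) A"
  shows "((\<lambda>x. (c x - c x0) * A x) has_real_derivative c' * A x0) (at x0 within S)"
proof -
  have "((\<lambda>x. (c x - c x0) / (x - x0) * A x) \<longlongrightarrow> c' * A x0) (at x0 within S)"
    using tendsto_mult[OF assms(1)[unfolded has_field_derivative_iff] assms(2)[unfolded continuous_within]] .
  then show ?thesis
    unfolding has_field_derivative_iff by simp
qed

lemma has_real_derivative_zero_by_increment_bound:
  fixes F I :: "real \<Rightarrow> real"
  assumes "continuous (at x0 within S) I"
    and "\<And>x. x \<in> S \<Longrightarrow> \<bar>F x - F x0\<bar> \<le> C * \<bar>x - x0\<bar> * \<bar>I x - I x0\<bar>"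
  shows "(F has_real_derivative 0) (at x0 within S)"
  unfolding has_field_derivative_iff
proof (rule Lim_null_comparison)
  have "\<forall>\<^sub>F x in at x0 within S. x \<in> S \<and> x \<noteq> x0"
    by (simp add: eventually_at_filter)
  then show "\<forall>\<^sub>F x in at x0 within S. norm ((F x - F x0) / (x - x0)) \<le> C * \<bar>I x - I x0\<bar>"
  proof (rule eventually_mono)
    fix x assume "x \<in> S \<and> x \<noteq> x0"
    then show "norm ((F x - F x0) / (x - x0)) \<le> C * \<bar>I x - I x0\<bar>"
      using assms(2)[of x] by (simp add: abs_divide divide_le_eq mult_ac)
  qed
  have "((\<lambda>x. C * \<bar>I x - I x0\<bar>) \<longlongrightarrow> C * \<bar>I x0 - I x0\<bar>) (at x0 within S)"
    using assms(1) unfolding continuous_within by (intro tendsto_intros)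
  then show "((\<lambda>x. C * \<bar>I x - I x0\<bar>) \<longlongrightarrow> 0) (at x0 within S)"
    by simp
qed

lemma integral_lipschitz_weight_bound:
  fixes \<phi> q :: "real \<Rightarrow> real"
  assumes q: "q absolutely_integrable_on {a..b}" and \<phi>: "C-lipschitz_on {a..b} \<phi>"
    and \<phi>0: "\<phi> x0 = 0" and uv: "a \<le> u" "v \<le> b" and x0: "x0 \<in> {u..v}"
  shows "\<bar>integral {u..v} (\<lambda>s. \<phi> s * q s)\<bar> \<le> C * (v - u) * integral {u..v} (\<lambda>s. \<bar>q s\<bar>)"
proof -
  have "norm (integral {u..v} (\<lambda>s. \<phi> s * q s)) \<le> integral {u..v} (\<lambda>s. C * (v - u) * \<bar>q s\<bar>)"
  proof (rule integral_norm_bound_integral)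
    show "(\<lambda>s. \<phi> s * q s) integrable_on {u..v}"
      using set_lebesgue_integral_eq_integral(1)[OF
          absolutely_integrable_continuous_mult[OF lipschitz_on_continuous_on[OF \<phi>] q]]
        integrable_on_subinterval uv by fastforce
    have "(\<lambda>s. \<bar>q s\<bar>) integrable_on {a..b}"
      using q by (simp add: absolutely_integrable_on_def)
    then show "(\<lambda>s. C * (v - u) * \<bar>q s\<bar>) integrable_on {u..v}"
      using integrable_on_subinterval[of "\<lambda>s. \<bar>q s\<bar>" "{a..b}" u v] uv
      by (auto intro: integrable_on_mult_right)
    fix s assume s: "s \<in> {u..v}"
    have "\<bar>\<phi> s\<bar> \<le> C * \<bar>s - x0\<bar>"
      using lipschitz_onD[OF \<phi>, of s x0] s x0 uv \<phi>0 by (simp add: dist_real_def)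
    also have "\<dots> \<le> C * (v - u)"
      using s x0 lipschitz_on_nonneg[OF \<phi>] by (intro mult_left_mono) auto
    finally show "norm (\<phi> s * q s) \<le> C * (v - u) * \<bar>q s\<bar>"
      by (simp add: abs_mult mult_right_mono)
  qed
  then show ?thesis
    by simp
qed

lemma integral_vanishing_weight_has_derivative_zero:
  fixes \<phi> q :: "real \<Rightarrow> real"
  assumes q: "q absolutely_integrable_on {a..b}" and \<phi>: "C-lipschitz_on {a..b} \<phi>"
    and \<phi>0: "\<phi> x0 = 0" and x0: "x0 \<in> {a..b}"
  shows "((\<lambda>x. integral {a..x} (\<lambda>s. \<phi> s * q s)) has_real_derivative 0) (at x0 within {a..b})"
proof -
  define F where "F = (\<lambda>x. integral {a..x} (\<lambda>s. \<phi> s * q s))"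
  define I where "I x = integral {a..x} (\<lambda>s. \<bar>q s\<bar>)" for x
  have \<phi>q: "(\<lambda>s. \<phi> s * q s) integrable_on {a..b}"
    using absolutely_integrable_continuous_mult[OF lipschitz_on_continuous_on[OF \<phi>] q]
    by (rule set_lebesgue_integral_eq_integral(1))
  have absq: "(\<lambda>s. \<bar>q s\<bar>) integrable_on {a..b}"
    using q by (simp add: absolutely_integrable_on_def)
  have increment: "\<bar>F v - F u\<bar> \<le> C * (v - u) * (I v - I u)" and I_mono: "I u \<le> I v"
    if uv: "a \<le> u" "u \<le> v" "v \<le> b" and "x0 \<in> {u..v}" for u v
  proof -
    have "F v - F u = integral {u..v} (\<lambda>s. \<phi> s * q s)" "I v - I u = integral {u..v} (\<lambda>s. \<bar>q s\<bar>)"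
      unfolding F_def I_def using integral_interval_diff[OF \<phi>q uv] integral_interval_diff[OF absq uv] .
    then show "\<bar>F v - F u\<bar> \<le> C * (v - u) * (I v - I u)" "I u \<le> I v"
      using integral_lipschitz_weight_bound[OF q \<phi> \<phi>0 uv(1,3) that(4)]
        integral_nonneg[OF integrable_on_subinterval[OF absq], of u v] uv
      by simp_all
  qed
  have "(F has_real_derivative 0) (at x0 within {a..b})"
  proof (rule has_real_derivative_zero_by_increment_bound)
    show "continuous (at x0 within {a..b}) I"
      using indefinite_integral_continuous_1[OF absq] x0 unfolding I_def
      by (simp add: continuous_on_eq_continuous_within)
    fix x assume x: "x \<in> {a..b}"
    show "\<bar>F x - F x0\<bar> \<le> C * \<bar>x - x0\<bar> * \<bar>I x - I x0\<bar>"
    proof (cases "x0 \<le> x")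
      case True
      then show ?thesis
        using increment[of x0 x] I_mono[of x0 x] x x0 by simp
    next
      case False
      then show ?thesis
        using increment[of x x0] I_mono[of x x0] x x0 by (simp add: abs_minus_commute)
    qed
  qed
  then show ?thesis
    unfolding F_def .
qed

text \<open>Subtracting the frozen weight leaves (c x - c x0) \<integral>{a..x} \<alpha> q plus an integral whose weight
  c x0 (\<alpha> s - \<alpha> x0) vanishes at x0.\<close>

lemma integral_weighted_has_derivative_left:
  fixes c \<alpha> q :: "real \<Rightarrow> real"
  assumes q: "q absolutely_integrable_on {a..b}" and \<alpha>: "C-lipschitz_on {a..b} \<alpha>"
    and c: "(c has_real_derivative c') (at x0 within {a..b})" and x0: "x0 \<in> {a..b}"
  shows "((\<lambda>x. c x * integral {a..x} (\<lambda>s. \<alpha> s * q s) - c x0 * \<alpha> x0 * integral {a..x} q)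
           has_real_derivative c' * integral {a..x0} (\<lambda>s. \<alpha> s * q s)) (at x0 within {a..b})"
proof -
  define A where "A = (\<lambda>x. integral {a..x} (\<lambda>s. \<alpha> s * q s))"
  define \<phi> where "\<phi> = (\<lambda>s. c x0 * (\<alpha> s - \<alpha> x0))"
  have \<alpha>q: "(\<lambda>s. \<alpha> s * q s) integrable_on {a..b}"
    using absolutely_integrable_continuous_mult[OF lipschitz_on_continuous_on[OF \<alpha>] q]
    by (rule set_lebesgue_integral_eq_integral(1))
  have qi: "q integrable_on {a..b}"
    using q by (rule set_lebesgue_integral_eq_integral(1))
  have \<phi>: "(\<bar>c x0\<bar> * (C + 0))-lipschitz_on {a..b} \<phi>"
    unfolding \<phi>_def by (intro lipschitz_intros \<alpha>)
  have split: "c x * A x - c x0 * \<alpha> x0 * integral {a..x} q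
      = (c x - c x0) * A x + integral {a..x} (\<lambda>s. \<phi> s * q s)" if "x \<in> {a..b}" for x
  proof -
    have "(\<lambda>s. \<alpha> s * q s) integrable_on {a..x}" "q integrable_on {a..x}"
      using integrable_on_subinterval[OF \<alpha>q] integrable_on_subinterval[OF qi] that by auto
    then have "integral {a..x} (\<lambda>s. c x0 * (\<alpha> s * q s) - c x0 * \<alpha> x0 * q s)
        = c x0 * A x - c x0 * \<alpha> x0 * integral {a..x} q"
      unfolding A_def by (simp add: integral_diff integrable_on_mult_right)
    moreover have "(\<lambda>s. \<phi> s * q s) = (\<lambda>s. c x0 * (\<alpha> s * q s) - c x0 * \<alpha> x0 * q s)"
      unfolding \<phi>_def by (simp add: fun_eq_iff algebra_simps)
    ultimately show ?thesis
      by (simp add: algebra_simps)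
  qed
  have "continuous (at x0 within {a..b}) A"
    using indefinite_integral_continuous_1[OF \<alpha>q] x0 unfolding A_def
    by (simp add: continuous_on_eq_continuous_within)
  then have "((\<lambda>x. (c x - c x0) * A x + integral {a..x} (\<lambda>s. \<phi> s * q s))
      has_real_derivative c' * A x0 + 0) (at x0 within {a..b})"
    by (intro DERIV_add DERIV_increment_mult_continuous c
        integral_vanishing_weight_has_derivative_zero[OF q \<phi> _ x0]) (simp_all add: \<phi>_def)
  then have "((\<lambda>x. (c x - c x0) * A x + integral {a..x} (\<lambda>s. \<phi> s * q s))
      has_real_derivative c' * A x0) (at x0 within {a..b})"
    by simp
  then have "((\<lambda>x. c x * A x - c x0 * \<alpha> x0 * integral {a..x} q) has_real_derivative c' * A x0)
      (at x0 within {a..b})"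
    by (rule has_field_derivative_transform_within[OF _ zero_less_one x0]) (simp add: split)
  then show ?thesis
    unfolding A_def .
qed

lemma integral_weighted_has_derivative_right:
  fixes c \<alpha> q :: "real \<Rightarrow> real"
  assumes q: "q absolutely_integrable_on {a..b}" and \<alpha>: "C-lipschitz_on {a..b} \<alpha>"
    and c: "(c has_real_derivative c') (at x0 within {a..b})" and x0: "x0 \<in> {a..b}"
  shows "((\<lambda>x. c x * integral {x..b} (\<lambda>s. \<alpha> s * q s) + c x0 * \<alpha> x0 * integral {a..x} q)
           has_real_derivative c' * integral {x0..b} (\<lambda>s. \<alpha> s * q s)) (at x0 within {a..b})"
proof -
  define A where "A = (\<lambda>x. integral {a..x} (\<lambda>s. \<alpha> s * q s))"
  have \<alpha>q: "(\<lambda>s. \<alpha> s * q s) integrable_on {a..b}"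
    using absolutely_integrable_continuous_mult[OF lipschitz_on_continuous_on[OF \<alpha>] q]
    by (rule set_lebesgue_integral_eq_integral(1))
  have upper: "integral {x..b} (\<lambda>s. \<alpha> s * q s) = A b - A x" if "x \<in> {a..b}" for x
    using integral_interval_diff[OF \<alpha>q, of x b] that unfolding A_def by simp
  have D: "((\<lambda>x. c x * A b - (c x * A x - c x0 * \<alpha> x0 * integral {a..x} q))
      has_real_derivative c' * integral {x0..b} (\<lambda>s. \<alpha> s * q s)) (at x0 within {a..b})"
  proof -
    have "((\<lambda>x. c x * A b - (c x * A x - c x0 * \<alpha> x0 * integral {a..x} q))
        has_real_derivative c' * A b - c' * A x0) (at x0 within {a..b})"
      unfolding A_def
      by (intro DERIV_diff DERIV_cmult_right c integral_weighted_has_derivative_left[OF q \<alpha> c x0])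
    moreover have "c' * A b - c' * A x0 = c' * integral {x0..b} (\<lambda>s. \<alpha> s * q s)"
      using upper[OF x0] by (simp add: right_diff_distrib)
    ultimately show ?thesis
      by simp
  qed
  show ?thesis
  proof (rule has_field_derivative_transform_within[OF D zero_less_one x0])
    fix x assume "x \<in> {a..b}"
    then show "c x * A b - (c x * A x - c x0 * \<alpha> x0 * integral {a..x} q)
        = c x * integral {x..b} (\<lambda>s. \<alpha> s * q s) + c x0 * \<alpha> x0 * integral {a..x} q"
      using upper by (simp add: right_diff_distrib)
  qed
qed

section \<open>The local boundary value problem\<close>

definition bvp_solution :: "real \<Rightarrow> real \<Rightarrow> (real \<Rightarrow> real) \<Rightarrow> (real \<Rightarrow> real) \<Rightarrow> bool" where
  "bvp_solution M L h y \<longleftrightarrow>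
     (\<exists>y1 y2 y3 g.
        g absolutely_integrable_on {0..L} \<and>
        (\<forall>x\<in>{0..L}.
            (y has_real_derivative y1 x) (at x within {0..L}) \<and>
            (y1 has_real_derivative y2 x) (at x within {0..L}) \<and>
            (y2 has_real_derivative y3 x) (at x within {0..L}) \<and>
            y3 x = y3 0 + integral {0..x} g) \<and>
        (\<exists>S. negligible S \<and> (\<forall>x\<in>{0<..<L} - S. g x - M * y2 x = h x)) \<and>
        y 0 = 0 \<and> y L = 0 \<and> y2 0 = 0 \<and> y2 L = 0)"

lemma is_solution_iff_bvp_solution:
  "is_solution M N L p y \<longleftrightarrow> bvp_solution M L (\<lambda>x. p x - N * integral {0..L} y) y"
  unfolding is_solution_def bvp_solution_def by (simp add: eq_diff_eq)

lemma bvp_solutionI: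
  assumes "\<And>x. x \<in> {0..L} \<Longrightarrow> (y has_real_derivative y' x) (at x within {0..L})"
    and "\<And>x. x \<in> {0..L} \<Longrightarrow> (y' has_real_derivative y'' x) (at x within {0..L})"
    and "\<And>x. x \<in> {0..L} \<Longrightarrow> (y'' has_real_derivative y''' x) (at x within {0..L})"
    and "\<And>x. x \<in> {0..L} \<Longrightarrow> y''' x = y''' 0 + integral {0..x} g"
    and "g absolutely_integrable_on {0..L}"
    and "negligible S" and "\<And>x. x \<in> {0<..<L} - S \<Longrightarrow> g x - M * y'' x = h x"
    and "y 0 = 0" "y L = 0" "y'' 0 = 0" "y'' L = 0"
  shows "bvp_solution M L h y"
proof -
  have "\<forall>x\<in>{0..L}. (y has_real_derivative y' x) (at x within {0..L}) \<and>
      (y' has_real_derivative y'' x) (at x within {0..L}) \<and>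
      (y'' has_real_derivative y''' x) (at x within {0..L}) \<and> y''' x = y''' 0 + integral {0..x} g"
    using assms(1-4) by blast
  moreover have "\<exists>S. negligible S \<and> (\<forall>x\<in>{0<..<L} - S. g x - M * y'' x = h x)"
    using assms(6,7) by blast
  ultimately show ?thesis
    unfolding bvp_solution_def using assms(5,8-11) by blast
qed

lemma bvp_solutionE:
  assumes "bvp_solution M L h y"
  obtains y' y'' y''' g S
  where "\<And>x. x \<in> {0..L} \<Longrightarrow> (y has_real_derivative y' x) (at x within {0..L})"
    and "\<And>x. x \<in> {0..L} \<Longrightarrow> (y' has_real_derivative y'' x) (at x within {0..L})"
    and "\<And>x. x \<in> {0..L} \<Longrightarrow> (y'' has_real_derivative y''' x) (at x within {0..L})"
    and "\<And>x. x \<in> {0..L} \<Longrightarrow> y''' x = y''' 0 + integral {0..x} g"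
    and "g absolutely_integrable_on {0..L}"
    and "negligible S" and "\<And>x. x \<in> {0<..<L} - S \<Longrightarrow> g x - M * y'' x = h x"
    and "y 0 = 0" "y L = 0" "y'' 0 = 0" "y'' L = 0"
proof -
  obtain y' y'' y''' g S where facts:
    "\<forall>x\<in>{0..L}. (y has_real_derivative y' x) (at x within {0..L}) \<and>
       (y' has_real_derivative y'' x) (at x within {0..L}) \<and>
       (y'' has_real_derivative y''' x) (at x within {0..L}) \<and>
       y''' x = y''' 0 + integral {0..x} g"
    "g absolutely_integrable_on {0..L}" "negligible S" "\<forall>x\<in>{0<..<L} - S. g x - M * y'' x = h x"
    "y 0 = 0" "y L = 0" "y'' 0 = 0" "y'' L = 0"
    using assms unfolding bvp_solution_def by blast
  show thesis
    by (rule that[of y' y'' y''' g S]) (use facts in blast)+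
qed

lemma bvp_solution_continuous:
  assumes "bvp_solution M L h y"
  shows "continuous_on {0..L} y"
proof -
  obtain y1 where "\<And>x. x \<in> {0..L} \<Longrightarrow> (y has_real_derivative y1 x) (at x within {0..L})"
    using bvp_solutionE[OF assms] by metis
  then show ?thesis
    by (rule DERIV_continuous_on)
qed

lemma bvp_solution_diff:
  assumes y: "bvp_solution M L h y" and z: "bvp_solution M L k z"
  shows "bvp_solution M L (\<lambda>x. h x - c * k x) (\<lambda>x. y x - c * z x)"
proof -
  obtain y1 y2 y3 g S where yd: "\<And>x. x \<in> {0..L} \<Longrightarrow> (y has_real_derivative y1 x) (at x within {0..L})"
      "\<And>x. x \<in> {0..L} \<Longrightarrow> (y1 has_real_derivative y2 x) (at x within {0..L})"
      "\<And>x. x \<in> {0..L} \<Longrightarrow> (y2 has_real_derivative y3 x) (at x within {0..L})"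
      "\<And>x. x \<in> {0..L} \<Longrightarrow> y3 x = y3 0 + integral {0..x} g"
    and g: "g absolutely_integrable_on {0..L}"
    and S: "negligible S" "\<And>x. x \<in> {0<..<L} - S \<Longrightarrow> g x - M * y2 x = h x"
    and yb: "y 0 = 0" "y L = 0" "y2 0 = 0" "y2 L = 0"
    using y by (rule bvp_solutionE) blast
  obtain z1 z2 z3 f T where zd: "\<And>x. x \<in> {0..L} \<Longrightarrow> (z has_real_derivative z1 x) (at x within {0..L})"
      "\<And>x. x \<in> {0..L} \<Longrightarrow> (z1 has_real_derivative z2 x) (at x within {0..L})"
      "\<And>x. x \<in> {0..L} \<Longrightarrow> (z2 has_real_derivative z3 x) (at x within {0..L})"
      "\<And>x. x \<in> {0..L} \<Longrightarrow> z3 x = z3 0 + integral {0..x} f"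
    and f: "f absolutely_integrable_on {0..L}"
    and T: "negligible T" "\<And>x. x \<in> {0<..<L} - T \<Longrightarrow> f x - M * z2 x = k x"
    and zb: "z 0 = 0" "z L = 0" "z2 0 = 0" "z2 L = 0"
    using z by (rule bvp_solutionE) blast
  show ?thesis
  proof (rule bvp_solutionI[where y'="\<lambda>x. y1 x - c * z1 x" and y''="\<lambda>x. y2 x - c * z2 x"
        and y'''="\<lambda>x. y3 x - c * z3 x" and g="\<lambda>t. g t - c * f t" and S="S \<union> T"])
    show "(\<lambda>t. g t - c * f t) absolutely_integrable_on {0..L}"
      using g set_integrable_mult_right[OF f] by (rule set_integral_diff(1))
    fix x assume x: "x \<in> {0..L}"
    have "integral {0..x} (\<lambda>t. g t - c * f t) = integral {0..x} g - c * integral {0..x} f"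
      using integrable_on_subinterval[OF set_lebesgue_integral_eq_integral(1)[OF g], of 0 x]
        integrable_on_subinterval[OF set_lebesgue_integral_eq_integral(1)[OF f], of 0 x] x
      by (simp add: integral_diff integrable_on_mult_right)
    then show "y3 x - c * z3 x = (y3 0 - c * z3 0) + integral {0..x} (\<lambda>t. g t - c * f t)"
      using yd(4)[OF x] zd(4)[OF x] by (simp add: algebra_simps)
  next
    fix x assume "x \<in> {0<..<L} - (S \<union> T)"
    then show "g x - c * f x - M * (y2 x - c * z2 x) = h x - c * k x"
      using S(2)[of x] T(2)[of x] by (auto simp: algebra_simps)
  qed (use S(1) T(1) yb zb yd(1-3) zd(1-3) in \<open>auto intro!: DERIV_diff DERIV_cmult\<close>)
qed

lemma bvp_solution_const_rhs_derivatives: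
  assumes "bvp_solution M L (\<lambda>_. d) y"
  obtains y1 y2 y3 where
    "\<And>x. x \<in> {0..L} \<Longrightarrow> (y has_real_derivative y1 x) (at x within {0..L})"
    "\<And>x. x \<in> {0..L} \<Longrightarrow> (y1 has_real_derivative y2 x) (at x within {0..L})"
    "\<And>x. x \<in> {0..L} \<Longrightarrow> (y2 has_real_derivative y3 x) (at x within {0..L})"
    "\<And>x. x \<in> {0..L} \<Longrightarrow> (y3 has_real_derivative M * y2 x + d) (at x within {0..L})"
    "y 0 = 0" "y L = 0" "y2 0 = 0" "y2 L = 0"
proof -
  obtain y1 y2 y3 g S where
    yd: "\<And>x. x \<in> {0..L} \<Longrightarrow> (y has_real_derivative y1 x) (at x within {0..L})"
      "\<And>x. x \<in> {0..L} \<Longrightarrow> (y1 has_real_derivative y2 x) (at x within {0..L})"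
      "\<And>x. x \<in> {0..L} \<Longrightarrow> (y2 has_real_derivative y3 x) (at x within {0..L})"
      "\<And>x. x \<in> {0..L} \<Longrightarrow> y3 x = y3 0 + integral {0..x} g"
    and "g absolutely_integrable_on {0..L}"
    and S: "negligible S" "\<And>x. x \<in> {0<..<L} - S \<Longrightarrow> g x - M * y2 x = d"
    and yb: "y 0 = 0" "y L = 0" "y2 0 = 0" "y2 L = 0"
    using assms by (rule bvp_solutionE) blast
  have rhs_cont: "continuous_on {0..L} (\<lambda>t. M * y2 t + d)"
    by (intro continuous_intros DERIV_continuous_on[OF yd(3)])
  have y3_eq: "y3 x = y3 0 + integral {0..x} (\<lambda>t. M * y2 t + d)" if x: "x \<in> {0..L}" for x
  proof -
    have "integral {0..x} g = integral {0..x} (\<lambda>t. M * y2 t + d)"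
    proof (rule integral_spike[OF negligible_Un[OF S(1) negligible_finite[of "{0, L}"]]])
      show "M * y2 t + d = g t" if "t \<in> {0..x} - (S \<union> {0, L})" for t
        using S(2)[of t] that x by force
    qed simp
    then show ?thesis
      using yd(4)[OF x] by simp
  qed
  have "(y3 has_real_derivative M * y2 x + d) (at x within {0..L})" if x: "x \<in> {0..L}" for x
  proof (rule has_field_derivative_transform_within[OF _ zero_less_one x])
    show "((\<lambda>u. y3 0 + integral {0..u} (\<lambda>t. M * y2 t + d)) has_real_derivative M * y2 x + d)
        (at x within {0..L})"
      using DERIV_add[OF DERIV_const integral_has_real_derivative[OF rhs_cont x]] by simp
  qed (rule y3_eq[symmetric])
  with yd(1-3) yb that show ?thesis
    by blast
qed

lemma energy_identity:
  fixes y y1 y2 y3 :: "real \<Rightarrow> real"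
  assumes L: "0 \<le> L"
    and D: "\<And>x. x \<in> {0..L} \<Longrightarrow> (y has_real_derivative y1 x) (at x within {0..L})"
      "\<And>x. x \<in> {0..L} \<Longrightarrow> (y1 has_real_derivative y2 x) (at x within {0..L})"
      "\<And>x. x \<in> {0..L} \<Longrightarrow> (y2 has_real_derivative y3 x) (at x within {0..L})"
      "\<And>x. x \<in> {0..L} \<Longrightarrow> (y3 has_real_derivative M * y2 x + d) (at x within {0..L})"
    and BC: "y 0 = 0" "y L = 0" "y2 0 = 0" "y2 L = 0"
  shows "integral {0..L} (\<lambda>x. (y2 x)\<^sup>2) + M * integral {0..L} (\<lambda>x. (y1 x)\<^sup>2) = d * integral {0..L} y"
proof -
  have cont: "continuous_on {0..L} y" "continuous_on {0..L} y1" "continuous_on {0..L} y2"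
    using DERIV_continuous_on D by blast+
  have has_int: "(f has_integral integral {0..L} f) {0..L}" if "continuous_on {0..L} f" for f :: "real \<Rightarrow> real"
    using integrable_continuous_real[OF that] by (rule integrable_integral)
  have "((\<lambda>x. M * (y2 x * y x) + d * y x - (y2 x)\<^sup>2) has_integral
      (y3 L * y L - y2 L * y1 L) - (y3 0 * y 0 - y2 0 * y1 0)) {0..L}"
  proof -
    have "((\<lambda>x. (M * y2 x + d) * y x + y3 x * y1 x - (y3 x * y1 x + y2 x * y2 x)) has_integral
        (y3 L * y L - y2 L * y1 L) - (y3 0 * y 0 - y2 0 * y1 0)) {0..L}"
      using L by (intro fundamental_theorem_of_calculus_real) (auto intro!: derivative_eq_intros D)
    then show ?thesis
      by (simp add: algebra_simps power2_eq_square)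
  qed
  moreover have "((\<lambda>x. M * (y2 x * y x) + d * y x - (y2 x)\<^sup>2) has_integral
      M * integral {0..L} (\<lambda>x. y2 x * y x) + d * integral {0..L} y - integral {0..L} (\<lambda>x. (y2 x)\<^sup>2)) {0..L}"
    using cont by (intro has_integral_diff has_integral_add has_integral_mult_right has_int continuous_intros)
  ultimately have first: "M * integral {0..L} (\<lambda>x. y2 x * y x) + d * integral {0..L} y
      = integral {0..L} (\<lambda>x. (y2 x)\<^sup>2)"
    using BC by (auto dest: has_integral_unique)
  have "((\<lambda>x. y2 x * y x + y1 x * y1 x) has_integral y1 L * y L - y1 0 * y 0) {0..L}"
    using L by (intro fundamental_theorem_of_calculus_real) (auto intro!: derivative_eq_intros D)
  moreover have "((\<lambda>x. y2 x * y x + y1 x * y1 x) has_integral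
      integral {0..L} (\<lambda>x. y2 x * y x) + integral {0..L} (\<lambda>x. (y1 x)\<^sup>2)) {0..L}"
    using cont unfolding power2_eq_square by (intro has_integral_add has_int continuous_intros)
  ultimately have second: "integral {0..L} (\<lambda>x. y2 x * y x) + integral {0..L} (\<lambda>x. (y1 x)\<^sup>2) = 0"
    using BC by (auto dest: has_integral_unique)
  then have "M * integral {0..L} (\<lambda>x. y2 x * y x) = - (M * integral {0..L} (\<lambda>x. (y1 x)\<^sup>2))"
    by (simp add: eq_neg_iff_add_eq_0 flip: distrib_left)
  with first show ?thesis
    by linarith
qed

lemma integral_square_le_integral_deriv_square:
  fixes y y' :: "real \<Rightarrow> real"
  assumes ab: "a < b"
    and D: "\<And>x. x \<in> {a..b} \<Longrightarrow> (y has_real_derivative y' x) (at x within {a..b})"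
    and cont: "continuous_on {a..b} y'" and BC: "y a = 0" "y b = 0"
  shows "12 * (integral {a..b} y)\<^sup>2 \<le> (b - a) ^ 3 * integral {a..b} (\<lambda>x. (y' x)\<^sup>2)"
proof -
  define m where "m = (a + b) / 2"
  define c where "c = integral {a..b} y"
  define P where "P = integral {a..b} (\<lambda>x. (y' x)\<^sup>2)"
  \<comment> \<open>Cauchy-Schwarz for \<integral> (x - m) y' = - c, as nonnegativity of \<integral> (y' + k (x - m))^2\<close>
  define k where "k = 12 * c / (b - a) ^ 3"
  have has_int: "(f has_integral integral {a..b} f) {a..b}" if "continuous_on {a..b} f" for f :: "real \<Rightarrow> real"
    using integrable_continuous_real[OF that] by (rule integrable_integral)
  have "(y has_integral c) {a..b}"
    unfolding c_def using DERIV_continuous_on[OF D] by (rule has_int)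
  moreover have "((\<lambda>x. (x - m) * y' x) has_integral integral {a..b} (\<lambda>x. (x - m) * y' x)) {a..b}"
    using cont by (intro has_int continuous_intros)
  ultimately have "((\<lambda>x. y x + (x - m) * y' x) has_integral c + integral {a..b} (\<lambda>x. (x - m) * y' x)) {a..b}"
    by (rule has_integral_add)
  moreover have "((\<lambda>x. y x + (x - m) * y' x) has_integral (b - m) * y b - (a - m) * y a) {a..b}"
    using ab by (intro fundamental_theorem_of_calculus_real) (auto intro!: derivative_eq_intros D)
  ultimately have moment: "integral {a..b} (\<lambda>x. (x - m) * y' x) = - c"
    using BC by (auto dest: has_integral_unique)
  have "((\<lambda>x. (x - m)\<^sup>2) has_integral (b - m) ^ 3 / 3 - (a - m) ^ 3 / 3) {a..b}"
    using ab by (intro fundamental_theorem_of_calculus_real) (auto intro!: derivative_eq_intros)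
  moreover have "(b - m) ^ 3 / 3 - (a - m) ^ 3 / 3 = (b - a) ^ 3 / 12"
    unfolding m_def by (simp add: field_simps power3_eq_cube)
  ultimately have "((\<lambda>x. (x - m)\<^sup>2) has_integral (b - a) ^ 3 / 12) {a..b}"
    by simp
  then have "((\<lambda>x. (y' x)\<^sup>2 + 2 * k * ((x - m) * y' x) + k\<^sup>2 * (x - m)\<^sup>2) has_integral
      P + 2 * k * (- c) + k\<^sup>2 * ((b - a) ^ 3 / 12)) {a..b}"
    unfolding P_def moment[symmetric] using cont
    by (intro has_integral_add has_integral_mult_right has_int continuous_intros)
  then have "0 \<le> P + 2 * k * (- c) + k\<^sup>2 * ((b - a) ^ 3 / 12)"
  proof (rule has_integral_nonneg)
    show "0 \<le> (y' x)\<^sup>2 + 2 * k * ((x - m) * y' x) + k\<^sup>2 * (x - m)\<^sup>2" for x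
      using zero_le_power2[of "y' x + k * (x - m)"] by (simp add: power2_eq_square algebra_simps)
  qed
  also have "P + 2 * k * (- c) + k\<^sup>2 * ((b - a) ^ 3 / 12) = P - 12 * c\<^sup>2 / (b - a) ^ 3"
    using ab unfolding k_def by (simp add: field_simps power2_eq_square)
  finally show ?thesis
    using ab unfolding c_def[symmetric] P_def[symmetric] by (simp add: field_simps)
qed

section \<open>The derivatives of the Green function in its first variable\<close>

text \<open>For x \<noteq> s, green_deriv M L n x s is the n-th derivative of green M L x s in x; the four
  coefficient functions multiply s and sinh (sqrt M s) when s < x, and L - s and
  sinh (sqrt M (L - s)) when x \<le> s.\<close>

definition green_poly_left :: "real \<Rightarrow> real \<Rightarrow> nat \<Rightarrow> real \<Rightarrow> real" where
  "green_poly_left M L n x = (case n of 0 \<Rightarrow> (L - x) / (M * L) | Suc 0 \<Rightarrow> - 1 / (M * L) | _ \<Rightarrow> 0)"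

definition green_poly_right :: "real \<Rightarrow> real \<Rightarrow> nat \<Rightarrow> real \<Rightarrow> real" where
  "green_poly_right M L n x = (case n of 0 \<Rightarrow> x / (M * L) | Suc 0 \<Rightarrow> 1 / (M * L) | _ \<Rightarrow> 0)"

definition green_hyp_left :: "real \<Rightarrow> real \<Rightarrow> nat \<Rightarrow> real \<Rightarrow> real" where
  "green_hyp_left M L n x =
     - ((- sqrt M) ^ n) * (if even n then sinh else cosh) (sqrt M * (L - x)) / (M * sqrt M * sinh (sqrt M * L))"

definition green_hyp_right :: "real \<Rightarrow> real \<Rightarrow> nat \<Rightarrow> real \<Rightarrow> real" where
  "green_hyp_right M L n x =
     - (sqrt M ^ n) * (if even n then sinh else cosh) (sqrt M * x) / (M * sqrt M * sinh (sqrt M * L))"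

definition green_deriv :: "real \<Rightarrow> real \<Rightarrow> nat \<Rightarrow> real \<Rightarrow> real \<Rightarrow> real" where
  "green_deriv M L n x s =
     (if x \<le> s then green_poly_right M L n x * (L - s) + green_hyp_right M L n x * sinh (sqrt M * (L - s))
      else green_poly_left M L n x * s + green_hyp_left M L n x * sinh (sqrt M * s))"

lemma green_eq_green_deriv_0: "green M L x s = green_deriv M L 0 x s"
  unfolding green_def green_deriv_def green_poly_left_def green_poly_right_def
    green_hyp_left_def green_hyp_right_def
  by (simp add: field_simps)

lemma integral_green_deriv_split:
  fixes q :: "real \<Rightarrow> real"
  assumes q: "q absolutely_integrable_on {0..L}" and x: "x \<in> {0..L}"
  shows "integral {0..L} (\<lambda>s. green_deriv M L n x s * q s)
       = green_poly_left M L n x * integral {0..x} (\<lambda>s. s * q s)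
         + green_hyp_left M L n x * integral {0..x} (\<lambda>s. sinh (sqrt M * s) * q s)
         + green_poly_right M L n x * integral {x..L} (\<lambda>s. (L - s) * q s)
         + green_hyp_right M L n x * integral {x..L} (\<lambda>s. sinh (sqrt M * (L - s)) * q s)"
proof -
  have int: "(\<lambda>s. \<alpha> s * q s) integrable_on {u..v}"
    if "continuous_on {0..L} \<alpha>" "0 \<le> u" "v \<le> L" for \<alpha> :: "real \<Rightarrow> real" and u v
    using set_lebesgue_integral_eq_integral(1)[OF absolutely_integrable_continuous_mult[OF that(1) q]]
      integrable_on_subinterval that by fastforce
  have left: "((\<lambda>s. green_deriv M L n x s * q s) has_integral
      green_poly_left M L n x * integral {0..x} (\<lambda>s. s * q s)
      + green_hyp_left M L n x * integral {0..x} (\<lambda>s. sinh (sqrt M * s) * q s)) {0..x}"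
  proof (rule has_integral_spike[OF negligible_sing])
    show "green_deriv M L n x s * q s
        = green_poly_left M L n x * (s * q s) + green_hyp_left M L n x * (sinh (sqrt M * s) * q s)"
      if "s \<in> {0..x} - {x}" for s
      using that by (simp add: green_deriv_def algebra_simps)
    show "((\<lambda>s. green_poly_left M L n x * (s * q s) + green_hyp_left M L n x * (sinh (sqrt M * s) * q s))
        has_integral green_poly_left M L n x * integral {0..x} (\<lambda>s. s * q s)
          + green_hyp_left M L n x * integral {0..x} (\<lambda>s. sinh (sqrt M * s) * q s)) {0..x}"
      using x by (intro has_integral_add has_integral_mult_right integrable_integral int)
        (auto intro!: continuous_intros)
  qed
  have right: "((\<lambda>s. green_deriv M L n x s * q s) has_integral
      green_poly_right M L n x * integral {x..L} (\<lambda>s. (L - s) * q s)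
      + green_hyp_right M L n x * integral {x..L} (\<lambda>s. sinh (sqrt M * (L - s)) * q s)) {x..L}"
  proof (rule has_integral_spike[OF negligible_empty])
    show "green_deriv M L n x s * q s
        = green_poly_right M L n x * ((L - s) * q s)
          + green_hyp_right M L n x * (sinh (sqrt M * (L - s)) * q s)"
      if "s \<in> {x..L} - {}" for s
      using that by (simp add: green_deriv_def algebra_simps)
    show "((\<lambda>s. green_poly_right M L n x * ((L - s) * q s)
          + green_hyp_right M L n x * (sinh (sqrt M * (L - s)) * q s))
        has_integral green_poly_right M L n x * integral {x..L} (\<lambda>s. (L - s) * q s)
          + green_hyp_right M L n x * integral {x..L} (\<lambda>s. sinh (sqrt M * (L - s)) * q s)) {x..L}"
      using x by (intro has_integral_add has_integral_mult_right integrable_integral int)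
        (auto intro!: continuous_intros)
  qed
  have "((\<lambda>s. green_deriv M L n x s * q s) has_integral
      (green_poly_left M L n x * integral {0..x} (\<lambda>s. s * q s)
       + green_hyp_left M L n x * integral {0..x} (\<lambda>s. sinh (sqrt M * s) * q s))
      + (green_poly_right M L n x * integral {x..L} (\<lambda>s. (L - s) * q s)
       + green_hyp_right M L n x * integral {x..L} (\<lambda>s. sinh (sqrt M * (L - s)) * q s))) {0..L}"
    using x by (intro has_integral_combine[OF _ _ left right]) auto
  then show ?thesis
    by (simp add: integral_unique add.assoc)
qed

context
  fixes M L :: real
  assumes M: "M > 0" and L: "L > 0"
begin

lemma has_real_derivative_green_poly_left:
  "(green_poly_left M L n has_real_derivative green_poly_left M L (Suc n) x) (at x within S)"
  unfolding green_poly_left_def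
  by (cases n) (use M L in \<open>auto intro!: derivative_eq_intros split: nat.split\<close>)

lemma has_real_derivative_green_poly_right:
  "(green_poly_right M L n has_real_derivative green_poly_right M L (Suc n) x) (at x within S)"
  unfolding green_poly_right_def
  by (cases n) (use M L in \<open>auto intro!: derivative_eq_intros split: nat.split\<close>)

lemma has_real_derivative_green_hyp_left:
  "(green_hyp_left M L n has_real_derivative green_hyp_left M L (Suc n) x) (at x within S)"
  unfolding green_hyp_left_def
  by (cases "even n") (use M L in \<open>auto intro!: derivative_eq_intros simp: field_simps\<close>)

lemma has_real_derivative_green_hyp_right:
  "(green_hyp_right M L n has_real_derivative green_hyp_right M L (Suc n) x) (at x within S)"
  unfolding green_hyp_right_def
  by (cases "even n") (use M L in \<open>auto intro!: derivative_eq_intros simp: field_simps\<close>)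

lemma green_hyp_jump:
  "green_hyp_left M L n x * sinh (sqrt M * x) - green_hyp_right M L n x * sinh (sqrt M * (L - x))
     = (if even n then 0 else sqrt M ^ n / (M * sqrt M))"
proof (cases "even n")
  case True
  then show ?thesis
    unfolding green_hyp_left_def green_hyp_right_def by (simp add: power_minus_even)
next
  case False
  have "green_hyp_left M L n x * sinh (sqrt M * x) - green_hyp_right M L n x * sinh (sqrt M * (L - x))
      = sqrt M ^ n / (M * sqrt M * sinh (sqrt M * L))
        * (sinh (sqrt M * x) * cosh (sqrt M * (L - x)) + cosh (sqrt M * x) * sinh (sqrt M * (L - x)))"
    using False unfolding green_hyp_left_def green_hyp_right_def
    by (simp add: power_minus_odd algebra_simps diff_divide_distrib add_divide_distrib)
  also have "\<dots> = sqrt M ^ n / (M * sqrt M * sinh (sqrt M * L)) * sinh (sqrt M * L)"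
    using sinh_add[of "sqrt M * x" "sqrt M * (L - x)"] by (simp add: algebra_simps)
  also have "\<dots> = sqrt M ^ n / (M * sqrt M)"
    using M L by simp
  finally show ?thesis
    using False by simp
qed

lemma green_deriv_jump:
  assumes "n \<le> 3"
  shows "green_poly_left M L n x * x + green_hyp_left M L n x * sinh (sqrt M * x)
         - (green_poly_right M L n x * (L - x) + green_hyp_right M L n x * sinh (sqrt M * (L - x)))
       = (if n = 3 then 1 else 0)"
proof -
  have "n = 0 \<or> n = 1 \<or> n = 2 \<or> n = 3"
    using assms by auto
  moreover have "sqrt M ^ 3 = M * sqrt M"
    using M by (simp add: power3_eq_cube)
  ultimately show ?thesis
    using green_hyp_jump[of n x] M L
    by (auto simp: green_poly_left_def green_poly_right_def field_simps)
qed

lemma green_deriv_4: "green_deriv M L 4 x s = M * green_deriv M L 2 x s"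
proof -
  have "sqrt M ^ 4 = M * sqrt M ^ 2"
    using M by (simp add: power_def numeral_eq_Suc)
  then have "green_hyp_left M L 4 x = M * green_hyp_left M L 2 x"
    "green_hyp_right M L 4 x = M * green_hyp_right M L 2 x"
    unfolding green_hyp_left_def green_hyp_right_def by (simp_all add: power_minus_even)
  moreover have "green_poly_left M L n x = 0" "green_poly_right M L n x = 0" if "n \<ge> 2" for n
    using that unfolding green_poly_left_def green_poly_right_def by (auto split: nat.split)
  ultimately show ?thesis
    unfolding green_deriv_def by simp
qed

lemma green_deriv_boundary:
  assumes "even n" "s \<in> {0..L}"
  shows "green_deriv M L n 0 s = 0" and "green_deriv M L n L s = 0"
  using assms unfolding green_deriv_def green_poly_left_def green_poly_right_def
    green_hyp_left_def green_hyp_right_def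
  by (auto split: nat.split)

text \<open>The x-derivatives of the kernel of order below 3 are continuous across the diagonal, while the
  third one jumps by 1 (green_deriv_jump); hence the correction at n = 3.\<close>

lemma integral_green_deriv_has_derivative:
  fixes q :: "real \<Rightarrow> real"
  assumes q: "q absolutely_integrable_on {0..L}" and x0: "x0 \<in> {0..L}" and n: "n \<le> 3"
  shows "((\<lambda>x. integral {0..L} (\<lambda>s. green_deriv M L n x s * q s)
              - (if n = 3 then 1 else 0) * integral {0..x} q)
           has_real_derivative integral {0..L} (\<lambda>s. green_deriv M L (Suc n) x0 s * q s))
         (at x0 within {0..L})"
proof -
  note lip_sinh = lipschitz_on_sinh_scaled[of "sqrt M" L, simplified]
  have lip_id: "1-lipschitz_on {0..L} (\<lambda>s. s)" and lip_reflect: "(0 + 1)-lipschitz_on {0..L} (\<lambda>s. L - s)"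
    by (intro lipschitz_intros)+
  define F where "F = (\<lambda>x.
      (green_poly_left M L n x * integral {0..x} (\<lambda>s. s * q s)
        - green_poly_left M L n x0 * x0 * integral {0..x} q)
    + (green_hyp_left M L n x * integral {0..x} (\<lambda>s. sinh (sqrt M * s) * q s)
        - green_hyp_left M L n x0 * sinh (sqrt M * x0) * integral {0..x} q)
    + (green_poly_right M L n x * integral {x..L} (\<lambda>s. (L - s) * q s)
        + green_poly_right M L n x0 * (L - x0) * integral {0..x} q)
    + (green_hyp_right M L n x * integral {x..L} (\<lambda>s. sinh (sqrt M * (L - s)) * q s)
        + green_hyp_right M L n x0 * sinh (sqrt M * (L - x0)) * integral {0..x} q))"
  have "(F has_real_derivative
        green_poly_left M L (Suc n) x0 * integral {0..x0} (\<lambda>s. s * q s)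
        + green_hyp_left M L (Suc n) x0 * integral {0..x0} (\<lambda>s. sinh (sqrt M * s) * q s)
        + green_poly_right M L (Suc n) x0 * integral {x0..L} (\<lambda>s. (L - s) * q s)
        + green_hyp_right M L (Suc n) x0 * integral {x0..L} (\<lambda>s. sinh (sqrt M * (L - s)) * q s))
      (at x0 within {0..L})"
    unfolding F_def
    by (intro DERIV_add
        integral_weighted_has_derivative_left[OF q lip_id has_real_derivative_green_poly_left x0]
        integral_weighted_has_derivative_left[OF q lip_sinh(1) has_real_derivative_green_hyp_left x0]
        integral_weighted_has_derivative_right[OF q lip_reflect has_real_derivative_green_poly_right x0]
        integral_weighted_has_derivative_right[OF q lip_sinh(2) has_real_derivative_green_hyp_right x0])
      (simp_all add: M L less_imp_le)
  then have "(F has_real_derivative integral {0..L} (\<lambda>s. green_deriv M L (Suc n) x0 s * q s))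
      (at x0 within {0..L})"
    by (simp add: integral_green_deriv_split[OF q x0])
  then show ?thesis
  proof (rule has_field_derivative_transform_within[OF _ zero_less_one x0])
    fix x assume x: "x \<in> {0..L}"
    have "F x = integral {0..L} (\<lambda>s. green_deriv M L n x s * q s)
        - (green_poly_left M L n x0 * x0 + green_hyp_left M L n x0 * sinh (sqrt M * x0)
           - (green_poly_right M L n x0 * (L - x0) + green_hyp_right M L n x0 * sinh (sqrt M * (L - x0))))
          * integral {0..x} q"
      unfolding F_def integral_green_deriv_split[OF q x] by (simp add: algebra_simps)
    then show "F x = integral {0..L} (\<lambda>s. green_deriv M L n x s * q s)
        - (if n = 3 then 1 else 0) * integral {0..x} q"
      unfolding green_deriv_jump[OF n] .
  qed
qed

lemma bvp_solution_green:
  fixes q :: "real \<Rightarrow> real"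
  assumes q: "q absolutely_integrable_on {0..L}"
  shows "bvp_solution M L q (\<lambda>x. integral {0..L} (\<lambda>s. green M L x s * q s))"
proof -
  define Y where "Y n x = integral {0..L} (\<lambda>s. green_deriv M L n x s * q s)" for n x
  have D: "(Y n has_real_derivative Y (Suc n) x) (at x within {0..L})" if "n < 3" "x \<in> {0..L}" for n x
    using integral_green_deriv_has_derivative[OF q that(2), of n] that unfolding Y_def by simp
  have D3: "((\<lambda>x. Y 3 x - integral {0..x} q) has_real_derivative M * Y 2 x) (at x within {0..L})"
    if "x \<in> {0..L}" for x
    using integral_green_deriv_has_derivative[OF q that, of 3]
    unfolding Y_def by (simp add: green_deriv_4 mult.assoc)
  have Y3: "Y 3 x = Y 3 0 + integral {0..x} (\<lambda>t. q t + M * Y 2 t)" if x: "x \<in> {0..L}" for x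
  proof -
    have "((\<lambda>t. M * Y 2 t) has_integral
        (Y 3 x - integral {0..x} q) - (Y 3 0 - integral {0..0} q)) {0..x}"
      using x by (intro fundamental_theorem_of_calculus_real has_field_derivative_subset[OF D3]) auto
    moreover have "(q has_integral integral {0..x} q) {0..x}"
      using integrable_on_subinterval[OF set_lebesgue_integral_eq_integral(1)[OF q]] x
      by (intro integrable_integral) auto
    ultimately have "((\<lambda>t. q t + M * Y 2 t) has_integral
        integral {0..x} q + ((Y 3 x - integral {0..x} q) - (Y 3 0 - integral {0..0} q))) {0..x}"
      by (intro has_integral_add)
    then show ?thesis
      by (simp add: integral_unique)
  qed
  have boundary: "Y n x = 0" if "even n" "x = 0 \<or> x = L" for n x
  proof -
    have "Y n x = integral {0..L} (\<lambda>_. 0)"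
      unfolding Y_def using green_deriv_boundary[OF \<open>even n\<close>] that(2) by (intro integral_cong) auto
    then show ?thesis
      by simp
  qed
  have "continuous_on {0..L} (Y 2)"
    by (rule DERIV_continuous_on[OF D[of 2]]) simp_all
  then have "(\<lambda>t. M * Y 2 t) absolutely_integrable_on {0..L}"
    by (intro absolutely_integrable_continuous_real continuous_intros)
  then have g: "(\<lambda>t. q t + M * Y 2 t) absolutely_integrable_on {0..L}"
    by (rule set_integral_add(1)[OF q])
  have "bvp_solution M L q (Y 0)"
  proof (rule bvp_solutionI[where y'="Y 1" and y''="Y 2" and y'''="Y 3" and S="{}"])
    fix x assume x: "x \<in> {0..L}"
    show "(Y 0 has_real_derivative Y 1 x) (at x within {0..L})"
      "(Y 1 has_real_derivative Y 2 x) (at x within {0..L})"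
      "(Y 2 has_real_derivative Y 3 x) (at x within {0..L})"
      using D[OF _ x] by (simp_all add: numeral_eq_Suc)
    show "Y 3 x = Y 3 0 + integral {0..x} (\<lambda>t. q t + M * Y 2 t)"
      using x by (rule Y3)
  qed (use g boundary L in simp_all)
  then show ?thesis
    unfolding Y_def green_eq_green_deriv_0 .
qed

section \<open>Energy estimates and the nonlocal problem\<close>

lemma bvp_solution_const_rhs_bound:
  assumes "bvp_solution M L (\<lambda>_. d) y"
  shows "12 * M * (integral {0..L} y)\<^sup>2 \<le> L ^ 3 * (d * integral {0..L} y)"
proof -
  obtain y1 y2 y3 where
    D: "\<And>x. x \<in> {0..L} \<Longrightarrow> (y has_real_derivative y1 x) (at x within {0..L})"
      "\<And>x. x \<in> {0..L} \<Longrightarrow> (y1 has_real_derivative y2 x) (at x within {0..L})"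
      "\<And>x. x \<in> {0..L} \<Longrightarrow> (y2 has_real_derivative y3 x) (at x within {0..L})"
      "\<And>x. x \<in> {0..L} \<Longrightarrow> (y3 has_real_derivative M * y2 x + d) (at x within {0..L})"
    and BC: "y 0 = 0" "y L = 0" "y2 0 = 0" "y2 L = 0"
    using assms by (rule bvp_solution_const_rhs_derivatives) blast
  have "0 \<le> integral {0..L} (\<lambda>x. (y2 x)\<^sup>2)"
    using DERIV_continuous_on[OF D(3)]
    by (intro integral_nonneg integrable_continuous_real continuous_intros) auto
  then have energy: "M * integral {0..L} (\<lambda>x. (y1 x)\<^sup>2) \<le> d * integral {0..L} y"
    using energy_identity[OF less_imp_le[OF L] D BC] by linarith
  have "12 * M * (integral {0..L} y)\<^sup>2 = M * (12 * (integral {0..L} y)\<^sup>2)"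
    by simp
  also have "\<dots> \<le> M * (L ^ 3 * integral {0..L} (\<lambda>x. (y1 x)\<^sup>2))"
    using integral_square_le_integral_deriv_square[OF L D(1) DERIV_continuous_on[OF D(2)]] BC M
    by (intro mult_left_mono) simp_all
  also have "\<dots> = L ^ 3 * (M * integral {0..L} (\<lambda>x. (y1 x)\<^sup>2))"
    by simp
  also have "\<dots> \<le> L ^ 3 * (d * integral {0..L} y)"
    using energy L by (intro mult_left_mono) simp_all
  finally show ?thesis .
qed

lemma bvp_solution_zero_rhs:
  assumes "bvp_solution M L (\<lambda>_. 0) y" and x: "x \<in> {0..L}"
  shows "y x = 0"
proof -
  obtain y1 y2 y3 where
    D: "\<And>x. x \<in> {0..L} \<Longrightarrow> (y has_real_derivative y1 x) (at x within {0..L})"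
      "\<And>x. x \<in> {0..L} \<Longrightarrow> (y1 has_real_derivative y2 x) (at x within {0..L})"
      "\<And>x. x \<in> {0..L} \<Longrightarrow> (y2 has_real_derivative y3 x) (at x within {0..L})"
      "\<And>x. x \<in> {0..L} \<Longrightarrow> (y3 has_real_derivative M * y2 x + 0) (at x within {0..L})"
    and BC: "y 0 = 0" "y L = 0" "y2 0 = 0" "y2 L = 0"
    using assms(1) by (rule bvp_solution_const_rhs_derivatives) blast
  have y1_cont: "continuous_on {0..L} (\<lambda>t. (y1 t)\<^sup>2)"
    using DERIV_continuous_on[OF D(2)] by (intro continuous_intros)
  have "0 \<le> integral {0..L} (\<lambda>x. (y1 x)\<^sup>2)" "0 \<le> integral {0..L} (\<lambda>x. (y2 x)\<^sup>2)"
    using y1_cont DERIV_continuous_on[OF D(3)]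
    by (auto intro!: integral_nonneg integrable_continuous_real continuous_intros)
  then have "integral (cbox 0 L) (\<lambda>x. (y1 x)\<^sup>2) = 0"
    using energy_identity[OF less_imp_le[OF L] D BC] M by (simp add: add_nonneg_eq_0_iff)
  then have "\<forall>t\<in>cbox 0 L. (y1 t)\<^sup>2 = 0"
    using integral_cbox_eq_0_iff[of 0 L "\<lambda>t. (y1 t)\<^sup>2"] y1_cont L by simp
  then have "(y has_real_derivative 0) (at t within {0..L})" if "t \<in> {0..L}" for t
    using D(1)[OF that] that by simp
  then obtain c where "\<forall>t\<in>{0..L}. y t = c"
    using has_field_derivative_zero_constant[of "{0..L}" y] by auto
  then show ?thesis
    using x BC L by auto
qed

lemma double_integral_green_bounds:
  defines "I \<equiv> integral {0..L} (\<lambda>x. integral {0..L} (\<lambda>s. green M L x s))"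
  shows "0 \<le> I" and "12 * M * I \<le> L ^ 3"
proof -
  have "bvp_solution M L (\<lambda>_. 1) (\<lambda>x. integral {0..L} (\<lambda>s. green M L x s))"
    using bvp_solution_green[of "\<lambda>_. 1"] by simp
  then have bound: "12 * M * I\<^sup>2 \<le> L ^ 3 * I"
    using bvp_solution_const_rhs_bound unfolding I_def by fastforce
  moreover have "0 \<le> 12 * M * I\<^sup>2"
    using M by simp
  ultimately have "0 \<le> L ^ 3 * I"
    by linarith
  then show "0 \<le> I"
    using L by (simp add: zero_le_mult_iff)
  show "12 * M * I \<le> L ^ 3"
  proof (cases "I = 0")
    case False
    with \<open>0 \<le> I\<close> have "I > 0"
      by simp
    with bound show ?thesis
      by (simp add: power2_eq_square)
  qed (use L in simp)
qed

lemma is_solution_unique: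
  assumes N: "\<bar>N\<bar> \<le> 8 * M / L ^ 3"
    and y: "is_solution M N L p y" and z: "is_solution M N L p z" and x: "x \<in> {0..L}"
  shows "y x = z x"
proof -
  define w where "w = (\<lambda>x. y x - z x)"
  define c where "c = integral {0..L} w"
  have y': "bvp_solution M L (\<lambda>x. p x - N * integral {0..L} y) y"
    and z': "bvp_solution M L (\<lambda>x. p x - N * integral {0..L} z) z"
    using y z by (simp_all add: is_solution_iff_bvp_solution)
  have c_eq: "c = integral {0..L} y - integral {0..L} z"
    unfolding c_def w_def
    using integrable_continuous_real[OF bvp_solution_continuous[OF y']]
      integrable_continuous_real[OF bvp_solution_continuous[OF z']]
    by (simp add: integral_diff)
  have "(\<lambda>x. p x - N * integral {0..L} y - (p x - N * integral {0..L} z)) = (\<lambda>_. - N * c)"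
    by (simp add: c_eq algebra_simps)
  then have w: "bvp_solution M L (\<lambda>_. - N * c) w"
    using bvp_solution_diff[OF y' z', of 1] unfolding w_def by simp
  have "12 * M * c\<^sup>2 \<le> L ^ 3 * (- N * c * c)"
    using bvp_solution_const_rhs_bound[OF w] unfolding c_def by simp
  also have "\<dots> \<le> L ^ 3 * (8 * M / L ^ 3 * c\<^sup>2)"
  proof -
    have "- N * c * c \<le> \<bar>N\<bar> * c\<^sup>2"
      using mult_right_mono[of "- N" "\<bar>N\<bar>" "c\<^sup>2"] by (simp add: power2_eq_square mult.assoc)
    also have "\<dots> \<le> 8 * M / L ^ 3 * c\<^sup>2"
      using N by (rule mult_right_mono) simp
    finally show ?thesis
      using L by (intro mult_left_mono) simp_all
  qed
  also have "\<dots> = 8 * M * c\<^sup>2"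
    using L by simp
  finally have "c = 0"
    using M by (simp add: mult_le_cancel_right)
  then have "bvp_solution M L (\<lambda>_. 0) w"
    using w by simp
  then have "w x = 0"
    by (rule bvp_solution_zero_rhs[OF _ x])
  then show ?thesis
    unfolding w_def by simp
qed

lemma is_solution_green_formula:
  assumes N: "\<bar>N\<bar> \<le> 8 * M / L ^ 3" and p: "p absolutely_integrable_on {0..L}"
  shows "is_solution M N L p (\<lambda>x. integral {0..L} (\<lambda>s. green M L x s * p s)
           - N * integral {0..L} (\<lambda>s. green M L x s)
             / (1 + N * integral {0..L} (\<lambda>x. integral {0..L} (\<lambda>s. green M L x s)))
             * integral {0..L} (\<lambda>x. integral {0..L} (\<lambda>s. green M L x s * p s)))"
proof -
  define Y where "Y = (\<lambda>x. integral {0..L} (\<lambda>s. green M L x s * p s))"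
  define W where "W = (\<lambda>x. integral {0..L} (\<lambda>s. green M L x s))"
  define I where "I = integral {0..L} W"
  define K where "K = N * integral {0..L} Y / (1 + N * I)"
  have Y: "bvp_solution M L p Y"
    unfolding Y_def by (rule bvp_solution_green[OF p])
  have W: "bvp_solution M L (\<lambda>_. 1) W"
    using bvp_solution_green[of "\<lambda>_. 1"] unfolding W_def by simp
  have "\<bar>N\<bar> * I \<le> 8 * M / L ^ 3 * I"
    using N double_integral_green_bounds(1) unfolding I_def W_def by (rule mult_right_mono)
  also have "\<dots> \<le> 2 / 3"
    using double_integral_green_bounds(2) L unfolding I_def W_def by (simp add: field_simps)
  moreover have "- N * I \<le> \<bar>N\<bar> * I"
    using double_integral_green_bounds(1) unfolding I_def W_def
    by (intro mult_right_mono) simp_all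
  ultimately have "0 < 1 + N * I"
    by linarith
  then have K: "N * (integral {0..L} Y - K * I) = K"
    unfolding K_def by (simp add: field_simps)
  have "integral {0..L} (\<lambda>x. Y x - K * W x) = integral {0..L} Y - K * I"
    unfolding I_def
    using integrable_continuous_real[OF bvp_solution_continuous[OF Y]]
      integrable_continuous_real[OF bvp_solution_continuous[OF W]]
    by (simp add: integral_diff integrable_on_mult_right)
  then have "(\<lambda>x. p x - K * 1) = (\<lambda>x. p x - N * integral {0..L} (\<lambda>x. Y x - K * W x))"
    using K by simp
  then have "is_solution M N L p (\<lambda>x. Y x - K * W x)"
    using bvp_solution_diff[OF Y W, of K] by (simp add: is_solution_iff_bvp_solution)
  moreover have "(\<lambda>x. Y x - K * W x) = (\<lambda>x. Y x - N * W x / (1 + N * I) * integral {0..L} Y)"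
    unfolding K_def by (simp add: fun_eq_iff)
  ultimately show ?thesis
    unfolding Y_def W_def I_def by simp
qed

end

theorem theorem2p1:
  fixes L M N :: real and p :: "real \<Rightarrow> real"
  assumes "L > 0" and "M > 0" and "\<bar>N\<bar> \<le> 8 * M / L ^ 3"
    and "p absolutely_integrable_on {0..L}"
  shows "(\<exists>y. is_solution M N L p y) \<and>
         (\<forall>y. is_solution M N L p y \<longrightarrow>
            (\<forall>x\<in>{0..L}.
               y x = integral {0..L} (\<lambda>s. green M L x s * p s)
                 - N * integral {0..L} (\<lambda>s. green M L x s)
                   / (1 + N * integral {0..L} (\<lambda>x. integral {0..L} (\<lambda>s. green M L x s)))
                   * integral {0..L} (\<lambda>x. integral {0..L} (\<lambda>s. green M L x s * p s))))"
  using is_solution_green_formula[OF assms(2,1,3,4)] is_solution_unique[OF assms(2,1,3)] by blast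

end
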